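(* Let $\mathbf{A},\mathbf{C}\in\mathbb{R}^{n\times n}$ be symmetric with $\mathbf{C}$ positive definite, let $s\in[1,n]$ be an integer, $k\in\{1,\dots,n\}$, $\theta\ge0$, and let $f(\mathbf{x})=h(\mathbf{x})/g(\mathbf{x})$ with $h(\mathbf{x})=\tfrac12\mathbf{x}^T\mathbf{A}\mathbf{x}$, $g(\mathbf{x})=\tfrac12\mathbf{x}^T\mathbf{C}\mathbf{x}$. Consider the decomposition algorithm: starting from $\mathbf{x}^0$ with $\|\mathbf{x}^0\|_0\le s$, at iteration $t$ choose (by any rule) a working set $B\subseteq\{1,\dots,n\}$ with $|B|=k$, set $N=\{1,\dots,n\}\setminus B$, set $\mathbf{x}^{t+1}_N=\mathbf{x}^t_N$ and let $\mathbf{x}^{t+1}_B$ be a global minimizer of $$\frac{h(\mathbf{x}_B,\mathbf{x}^t_N)+\tfrac{\theta}{2}\|\mathbf{x}_B-\mathbf{x}^t_B\|_2^2}{g(\mathbf{x}_B,\mathbf{x}^t_N)}\quad\text{s.t. }\|\mathbf{x}_B\|_0+\|\mathbf{x}^t_N\|_0\le s,$$ where $h(\mathbf{x}_B,\mathbf{x}_N)$, $g(\mathbf{x}_B,\mathbf{x}_N)$ denote $h$, $g$ evaluated at the vector whose $B$-coordinates are $\mathbf{x}_B$ and $N$-coordinates are $\mathbf{x}_N$. Assume the iterates satisfy $0<\|\mathbf{x}^t\|<\infty$ for all $t$. Then for all $t$, $$f(\mathbf{x}^{t+1})-f(\mathbf{x}^t)\le\frac{-\theta\|\mathbf{x}^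{t+1}-\mathbf{x}^t\|_2^2}{(\mathbf{x}^{t+1})^T\mathbf{C}\mathbf{x}^{t+1}}.$$
   Context: $\|\mathbf{x}\|_0$ is the number of nonzero entries of $\mathbf{x}$. *)

theory Defs
  imports "HOL-Analysis.Analysis"
begin

definition l0norm :: "real ^ 'n \<Rightarrow> nat" where
  "l0norm x = card {i. x $ i \<noteq> 0}"

definition qhalf :: "real ^ 'n ^ 'n \<Rightarrow> real ^ 'n \<Rightarrow> real" where
  "qhalf M x = (1/2) * (x \<bullet> (M *v x))"

definition pos_def_mat :: "real ^ 'n ^ 'n \<Rightarrow> bool" where
  "pos_def_mat C \<longleftrightarrow> (\<forall>x. x \<noteq> 0 \<longrightarrow> x \<bullet> (C *v x) > 0)"

end

theory Submission
  imports Defs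
begin

(* The current iterate x^t is itself feasible for the subproblem at step t, and there the
   proximal term vanishes; comparing the global minimizer x^(t+1) with it gives the descent. *)

lemma qhalf_pos_def_pos:
  assumes "pos_def_mat C" and "x \<noteq> 0"
  shows "qhalf C x > 0"
  using assms unfolding pos_def_mat_def qhalf_def by auto

lemma proximal_ratio_descent:
  fixes h h' g g' \<theta> r :: real
  assumes "g' > 0" and "(h' + \<theta> / 2 * r) / g' \<le> h / g"
  shows "h' / g' - h / g \<le> - \<theta> * r / (2 * g')"
proof -
  have "(h' + \<theta> / 2 * r) / g' = h' / g' + \<theta> * r / (2 * g')"
    using \<open>g' > 0\<close> by (simp add: field_simps)
  then show ?thesis using assms(2) by simp
qed

theorem lemma2:
  fixes A C :: "real ^ 'n ^ 'n"
    and s k :: nat and \<theta> :: real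
    and x :: "nat \<Rightarrow> real ^ 'n"
    and B :: "nat \<Rightarrow> 'n set"
  assumes symA: "transpose A = A"
    and symC: "transpose C = C"
    and pdC: "pos_def_mat C"
    and s_range: "1 \<le> s" "s \<le> CARD('n)"
    and k_range: "1 \<le> k" "k \<le> CARD('n)"
    and theta: "\<theta> \<ge> 0"
    and init: "l0norm (x 0) \<le> s"
    and Bcard: "\<And>t. card (B t) = k"
    and fixN: "\<And>t i. i \<notin> B t \<Longrightarrow> x (Suc t) $ i = x t $ i"
    and feas: "\<And>t. l0norm (x (Suc t)) \<le> s"
    and globmin: "\<And>t y. (\<forall>i. i \<notin> B t \<longrightarrow> y $ i = x t $ i) \<Longrightarrow> l0norm y \<le> s \<Longrightarrow> y \<noteq> 0 \<Longrightarrow>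
        (qhalf A (x (Suc t)) + \<theta> / 2 * (norm (x (Suc t) - x t))\<^sup>2) / qhalf C (x (Suc t))
          \<le> (qhalf A y + \<theta> / 2 * (norm (y - x t))\<^sup>2) / qhalf C y"
    and nonzero: "\<And>t. x t \<noteq> 0"
  shows "\<forall>t. qhalf A (x (Suc t)) / qhalf C (x (Suc t)) - qhalf A (x t) / qhalf C (x t)
           \<le> - \<theta> * (norm (x (Suc t) - x t))\<^sup>2 / (x (Suc t) \<bullet> (C *v x (Suc t)))"
proof
  fix t
  have feasible_t: "l0norm (x t) \<le> s"
    using init feas by (cases t) auto
  have "(qhalf A (x (Suc t)) + \<theta> / 2 * (norm (x (Suc t) - x t))\<^sup>2) / qhalf C (x (Suc t))
      \<le> qhalf A (x t) / qhalf C (x t)"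
    using globmin[of t "x t"] feasible_t nonzero by simp
  moreover have "x (Suc t) \<bullet> (C *v x (Suc t)) = 2 * qhalf C (x (Suc t))"
    unfolding qhalf_def by simp
  ultimately show "qhalf A (x (Suc t)) / qhalf C (x (Suc t)) - qhalf A (x t) / qhalf C (x t)
      \<le> - \<theta> * (norm (x (Suc t) - x t))\<^sup>2 / (x (Suc t) \<bullet> (C *v x (Suc t)))"
    using proximal_ratio_descent qhalf_pos_def_pos[OF pdC nonzero] by simp
qed

end
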